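(* Let $K$ satisfy (K1) and (K2). For any $a,b\in[0,1]$, $$\sum_{k=1}^n\big(W_{nk}(a)-W_{nk}(b)\big)^2\le W\,n^{-1}h^{-3}\Big(\frac{8L_2}{\lambda_0}|a-b|\wedge h\Big)^2 .$$ In particular, if $\varepsilon_1,\dots,\varepsilon_n$ are i.i.d. $\mathcal N(0,\sigma^2)$, then $R_{a,b}:=\sum_{k=1}^nW_{nk}(a)\varepsilon_k-\sum_{k=1}^nW_{nk}(b)\varepsilon_k$ satisfies $\mathbb V(R_{a,b})\le\sigma^2Wn^{-1}h^{-3}\big(\frac{8L_2}{\lambda_0}|a-b|\wedge h\big)^2$.
   Context: $x_k=k/n$. (K1): $K$ nonnegative, $\int K=1$, supported in $[-1,1]$, $K_{\min}\mathbf 1_{\{|u|\le\Delta\}}\le K\le K_{\max}$ for constants $K_{\min},K_{\max},\Delta>0$. (K2): $K$ Lipschitz with constant $L_K$. For $\beta>0$ and $k_0=\lceil\beta\rceil-1$: $U(u)=(1,u,\dots,u^{k_0}/k_0!)^\top$, $\mathcal B_{nx}=\frac1{nh}\sum_lU(\tfrac{x_l-x}h)U(\tfrac{x_l-x}h)^\top K(\tfrac{x_l-x}h)$, $W_{nk}(x)=\frac1{nh}U(0)^\top\mathcal B_{nx}^{-1}U(\tfrac{x_k-x}h)K(\tfrac{x_k-x}h)$ (weights of the local polynomial estimator of order $k_0$, bandwidth $h$). Standing assumption: $h\ge1/(2n)$ and $\lambda_0>0$ is a constant with smallest eigenvalue of $\mathcal B_{nx}$ at least $\lambda_0$ for all $x\in[0,1]$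 ($n$ large). Constants: $C_*=8K_{\max}/\lambda_0$, $L_1=\sqrt e(L_K+K_{\max})$, $L_2=2\lceil\beta\rceil K_{\max}+\lceil\beta\rceil L_K$, $\widetilde C_*=L_1/(8L_2)+\sqrt eK_{\max}/\lambda_0$, $W=\max(4C_*^2,4\widetilde C_*^2)$. *)

theory Defs
  imports "HOL-Probability.Probability" "Jordan_Normal_Form.Char_Poly"
    "Jordan_Normal_Form.Gauss_Jordan_Elimination"
begin

definition lp_order :: "real \<Rightarrow> nat" where
  "lp_order \<beta> = nat \<lceil>\<beta>\<rceil> - 1"

definition Uvec :: "real \<Rightarrow> real \<Rightarrow> real Matrix.vec" where
  "Uvec \<beta> u = Matrix.vec (lp_order \<beta> + 1) (\<lambda>i. u ^ i / fact i)"

definition xpt :: "nat \<Rightarrow> nat \<Rightarrow> real" where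
  "xpt n k = real k / real n"

definition Bmat :: "(real \<Rightarrow> real) \<Rightarrow> real \<Rightarrow> nat \<Rightarrow> real \<Rightarrow> real \<Rightarrow> real Matrix.mat" where
  "Bmat K \<beta> n h x = Matrix.mat (lp_order \<beta> + 1) (lp_order \<beta> + 1)
     (\<lambda>(i, j). (1 / (real n * h)) * (\<Sum>l = 1..n.
        vec_index (Uvec \<beta> ((xpt n l - x) / h)) i * vec_index (Uvec \<beta> ((xpt n l - x) / h)) j
        * K ((xpt n l - x) / h)))"

definition Wnk :: "(real \<Rightarrow> real) \<Rightarrow> real \<Rightarrow> nat \<Rightarrow> real \<Rightarrow> nat \<Rightarrow> real \<Rightarrow> real" where
  "Wnk K \<beta> n h k x = (1 / (real n * h)) *
     scalar_prod (Uvec \<beta> 0) (the (mat_inverse (Bmat K \<beta> n h x)) *\<^sub>v Uvec \<beta> ((xpt n k - x) / h))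
     * K ((xpt n k - x) / h)"

definition Cstar :: "real \<Rightarrow> real \<Rightarrow> real" where
  "Cstar Kmax lam0 = 8 * Kmax / lam0"

definition L1const :: "real \<Rightarrow> real \<Rightarrow> real" where
  "L1const LK Kmax = sqrt (exp 1) * (LK + Kmax)"

definition L2const :: "real \<Rightarrow> real \<Rightarrow> real \<Rightarrow> real" where
  "L2const \<beta> LK Kmax = 2 * real_of_int \<lceil>\<beta>\<rceil> * Kmax + real_of_int \<lceil>\<beta>\<rceil> * LK"

definition Ctilde :: "real \<Rightarrow> real \<Rightarrow> real \<Rightarrow> real \<Rightarrow> real" where
  "Ctilde \<beta> LK Kmax lam0 = L1const LK Kmax / (8 * L2const \<beta> LK Kmax) + sqrt (exp 1) * Kmax / lam0"

definition Wconst :: "real \<Rightarrow> real \<Rightarrow> real \<Rightarrow> real \<Rightarrow> real" where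
  "Wconst \<beta> LK Kmax lam0 = max (4 * (Cstar Kmax lam0)\<^sup>2) (4 * (Ctilde \<beta> LK Kmax lam0)\<^sup>2)"

end

(*
  Write W_nk(x) = (nh)^-1 U(0)^T B_x^-1 g_x(k), where g_x(k) = K(u) U(u) with u = (x_k - x)/h.
  Since B_x is symmetric with all eigenvalues at least lam0, the Rayleigh quotient bound gives
  |B_x^-1 y| <= |y| / lam0. The vector g(u) = K(u) U(u) has norm at most sqrt(e) Kmax and is
  sqrt(e) (LK + Kmax)-Lipschitz in u, and the entries of B_b - B_a are at most
  (nh)^-1 N (2 Kmax + LK) |a - b| / h, where N counts the design points within h of a or b.
  The identity
    B_a^-1 g_a - B_b^-1 g_b = B_a^-1 ((g_a - g_b) + (B_b - B_a) B_b^-1 g_b)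
  therefore bounds each |W_nk(a) - W_nk(b)| by a multiple of |a - b| / h, and only the N = O(nh)
  active indices contribute. When |a - b| is not small compared with h, the crude bound
  sum_k W_nk(x)^2 <= (2nh + 1) (sqrt(e) Kmax / (nh lam0))^2 suffices instead.
  The variance bound follows from Var(sum_k c_k eps_k) = sigma^2 sum_k c_k^2.
*)

theory Submission
  imports Defs
begin

section \<open>Rayleigh quotient bound for symmetric matrices\<close>

lemma compact_unit_sphere_finite_support:
  "compact {v :: nat \<Rightarrow> real. (\<forall>i\<ge>D. v i = 0) \<and> (\<Sum>i<D. (v i)\<^sup>2) = 1}"
    (is "compact ?S")
proof -
  define box where "box = Pi\<^sub>E UNIV (\<lambda>i. if i < D then {-1..1} else {0::real})"
  have "compactin (product_topology (\<lambda>_. euclidean) UNIV) box"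
    unfolding box_def by (subst compactin_PiE) auto
  then have "compact box"
    by (simp add: euclidean_product_topology compactin_euclidean_iff)
  moreover have "closed {v :: nat \<Rightarrow> real. (\<Sum>i<D. (v i)\<^sup>2) = 1}"
    by (intro closed_Collect_eq continuous_intros continuous_on_product_coordinates)
  moreover have "?S = box \<inter> {v. (\<Sum>i<D. (v i)\<^sup>2) = 1}"
  proof -
    have "\<bar>v i\<bar> \<le> 1" if "(\<Sum>i<D. (v i)\<^sup>2) = 1" "i < D" for v :: "nat \<Rightarrow> real" and i
      using member_le_sum[of i "{..<D}" "\<lambda>i. (v i)\<^sup>2"] that abs_square_le_1 by auto
    then show ?thesis
      by (auto simp: box_def PiE_UNIV_domain Pi_def abs_le_iff not_less split: if_splits)
  qed
  ultimately show ?thesis by (simp add: compact_Int_closed)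
qed

lemma quadratic_form_ge_of_unit_sphere:
  fixes A :: "nat \<Rightarrow> nat \<Rightarrow> real"
  assumes sphere: "\<And>z. \<forall>i\<ge>D. z i = 0 \<Longrightarrow> (\<Sum>i<D. (z i)\<^sup>2) = 1
                          \<Longrightarrow> m \<le> (\<Sum>i<D. z i * (\<Sum>j<D. A i j * z j))"
  shows "m * (\<Sum>i<D. (y i)\<^sup>2) \<le> (\<Sum>i<D. y i * (\<Sum>j<D. A i j * y j))"
proof -
  define Q where "Q y = (\<Sum>i<D. y i * (\<Sum>j<D. A i j * y j))" for y
  define N where "N y = (\<Sum>i<D. (y i)\<^sup>2)" for y :: "nat \<Rightarrow> real"
  show ?thesis
  proof (cases "N y = 0")
    case True
    then have "\<forall>i<D. y i = 0" by (simp add: N_def sum_nonneg_eq_0_iff)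
    then show ?thesis using True by (simp add: N_def)
  next
    case False
    then have pos: "N y > 0" unfolding N_def by (simp add: less_le sum_nonneg)
    define s where "s = sqrt (N y)"
    have ss: "s * s = N y" "s > 0" using pos by (simp_all add: s_def)
    define z where "z i = (if i < D then y i / s else 0)" for i
    have "N z = N y / (s * s)"
      by (simp add: N_def z_def power_divide power2_eq_square sum_divide_distrib)
    then have "N z = 1" using ss pos by simp
    moreover have "\<forall>i\<ge>D. z i = 0" by (simp add: z_def)
    ultimately have "m \<le> Q z" using sphere[of z] unfolding N_def Q_def by blast
    moreover have "Q z = Q y / (s * s)"
    proof -
      have "Q z = (\<Sum>i<D. (y i / s) * ((\<Sum>j<D. A i j * y j) / s))"
        unfolding Q_def z_def by (intro sum.cong refl) (simp add: sum_divide_distrib)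
      also have "\<dots> = (\<Sum>i<D. y i * (\<Sum>j<D. A i j * y j) / (s * s))"
        by (intro sum.cong refl) simp
      finally show ?thesis by (simp add: Q_def sum_divide_distrib)
    qed
    ultimately have "m \<le> Q y / N y" using ss by simp
    then show ?thesis using pos by (simp add: Q_def N_def field_simps)
  qed
qed

lemma quadratic_form_attains_min_on_sphere:
  fixes A :: "nat \<Rightarrow> nat \<Rightarrow> real"
  assumes "D > 0"
  obtains v where "(\<Sum>i<D. (v i)\<^sup>2) = 1"
    and "\<And>y. (\<Sum>i<D. v i * (\<Sum>j<D. A i j * v j)) * (\<Sum>i<D. (y i)\<^sup>2)
              \<le> (\<Sum>i<D. y i * (\<Sum>j<D. A i j * y j))"
proof -
  define Q where "Q y = (\<Sum>i<D. y i * (\<Sum>j<D. A i j * y j))" for y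
  define S where "S = {v :: nat \<Rightarrow> real. (\<forall>i\<ge>D. v i = 0) \<and> (\<Sum>i<D. (v i)\<^sup>2) = 1}"
  have "compact S"
    unfolding S_def by (rule compact_unit_sphere_finite_support)
  moreover have "(\<lambda>i. if i = 0 then 1 else 0) \<in> S"
  proof -
    have "(\<Sum>i<D. (if i = 0 then 1 else 0 :: real)\<^sup>2) = (\<Sum>i<D. if i = 0 then 1 else 0)"
      by (intro sum.cong) auto
    then show ?thesis using assms by (simp add: S_def)
  qed
  moreover have "continuous_on UNIV Q"
    unfolding Q_def by (intro continuous_intros continuous_on_product_coordinates)
  ultimately obtain v where v: "v \<in> S" and vmin: "\<And>z. z \<in> S \<Longrightarrow> Q v \<le> Q z"
    using continuous_attains_inf[of S Q] continuous_on_subset[of UNIV Q S] by blast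
  have "Q v * (\<Sum>i<D. (y i)\<^sup>2) \<le> Q y" for y
    unfolding Q_def by (rule quadratic_form_ge_of_unit_sphere) (use vmin in \<open>simp add: S_def Q_def\<close>)
  with v show thesis using that unfolding S_def Q_def by blast
qed

lemma nonneg_linear_plus_quadratic_imp_zero:
  fixes a b :: real
  assumes "\<And>t. 0 \<le> a * t + b * t\<^sup>2"
  shows "a = 0"
proof (rule ccontr)
  assume "a \<noteq> 0"
  define c where "c = \<bar>b\<bar> + 1"
  have c: "c > 0" "b \<le> c - 1" by (auto simp: c_def)
  have "a * (- a / c) + b * (- a / c)\<^sup>2 \<le> - a\<^sup>2 / c + (c - 1) * a\<^sup>2 / c\<^sup>2"
    using c by (simp add: power2_eq_square divide_right_mono mult_right_mono)
  also have "\<dots> = - a\<^sup>2 / c\<^sup>2"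
    using c by (simp add: field_simps power2_eq_square)
  also have "\<dots> < 0" using \<open>a \<noteq> 0\<close> c by simp
  finally show False using assms[of "- a / c"] by simp
qed

lemma quadratic_form_add_scaled:
  fixes A :: "nat \<Rightarrow> nat \<Rightarrow> real"
  assumes sym: "\<And>i j. i < D \<Longrightarrow> j < D \<Longrightarrow> A i j = A j i"
  shows "(\<Sum>i<D. (v i + t * r i) * (\<Sum>j<D. A i j * (v j + t * r j)))
    = (\<Sum>i<D. v i * (\<Sum>j<D. A i j * v j)) + 2 * t * (\<Sum>i<D. r i * (\<Sum>j<D. A i j * v j))
      + t\<^sup>2 * (\<Sum>i<D. r i * (\<Sum>j<D. A i j * r j))"
proof -
  have "(\<Sum>i<D. v i * (\<Sum>j<D. A i j * r j)) = (\<Sum>i<D. \<Sum>j<D. v i * A i j * r j)"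
    by (simp add: sum_distrib_left mult.assoc)
  also have "\<dots> = (\<Sum>j<D. \<Sum>i<D. r j * (A j i * v i))"
    by (subst sum.swap) (auto simp: sym mult_ac intro!: sum.cong)
  finally have cross: "(\<Sum>i<D. v i * (\<Sum>j<D. A i j * r j)) = (\<Sum>i<D. r i * (\<Sum>j<D. A i j * v j))"
    by (simp add: sum_distrib_left)
  have "(\<Sum>i<D. (v i + t * r i) * (\<Sum>j<D. A i j * (v j + t * r j)))
     = (\<Sum>i<D. v i * (\<Sum>j<D. A i j * v j) + t * (v i * (\<Sum>j<D. A i j * r j))
         + t * (r i * (\<Sum>j<D. A i j * v j)) + t\<^sup>2 * (r i * (\<Sum>j<D. A i j * r j)))"
    by (intro sum.cong refl)
       (simp add: algebra_simps sum.distrib sum_distrib_left power2_eq_square)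
  then show ?thesis using cross by (simp add: sum.distrib sum_distrib_left[symmetric])
qed

lemma quadratic_form_minimiser_eigenvector:
  fixes A :: "nat \<Rightarrow> nat \<Rightarrow> real"
  assumes sym: "\<And>i j. i < D \<Longrightarrow> j < D \<Longrightarrow> A i j = A j i"
    and lower: "\<And>y. m * (\<Sum>i<D. (y i)\<^sup>2) \<le> (\<Sum>i<D. y i * (\<Sum>j<D. A i j * y j))"
    and attained: "(\<Sum>i<D. v i * (\<Sum>j<D. A i j * v j)) = m * (\<Sum>i<D. (v i)\<^sup>2)"
    and "i < D"
  shows "(\<Sum>j<D. A i j * v j) = m * v i"
proof -
  define Q where "Q y = (\<Sum>i<D. y i * (\<Sum>j<D. A i j * y j))" for y
  define N where "N y = (\<Sum>i<D. (y i)\<^sup>2)" for y :: "nat \<Rightarrow> real"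
  define r where "r i = (\<Sum>j<D. A i j * v j) - m * v i" for i
  \<comment> \<open>\<open>Q - m N\<close> is nonnegative and vanishes at \<open>v\<close>,
    so its derivative \<open>2 N r\<close> in the direction \<open>r\<close> must vanish.\<close>
  have "0 \<le> (2 * N r) * t + (Q r - m * N r) * t\<^sup>2" for t
  proof -
    have "(\<Sum>i<D. r i * (\<Sum>j<D. A i j * v j)) - m * (\<Sum>i<D. r i * v i)
        = (\<Sum>i<D. r i * ((\<Sum>j<D. A i j * v j) - m * v i))"
      by (simp add: sum_subtractf sum_distrib_left right_diff_distrib mult_ac)
    also have "\<dots> = N r" by (simp add: N_def r_def[symmetric] power2_eq_square)
    moreover
    have "N (\<lambda>i. v i + t * r i)
        = N v + 2 * t * (\<Sum>i<D. r i * v i) + t\<^sup>2 * N r"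
      by (simp add: N_def power2_eq_square algebra_simps sum.distrib sum_distrib_left)
    ultimately have "Q (\<lambda>i. v i + t * r i) - m * N (\<lambda>i. v i + t * r i)
        = (2 * N r) * t + (Q r - m * N r) * t\<^sup>2"
      using quadratic_form_add_scaled[where D=D and A=A and v=v and t=t and r=r, OF sym] attained
      by (simp add: Q_def N_def algebra_simps)
    then show ?thesis using lower[of "\<lambda>i. v i + t * r i"] by (simp add: Q_def N_def)
  qed
  then have "N r = 0" using nonneg_linear_plus_quadratic_imp_zero by fastforce
  then have "r i = 0" using \<open>i < D\<close> by (simp add: N_def sum_nonneg_eq_0_iff)
  then show ?thesis by (simp add: r_def)
qed

lemma quadratic_form_ge_eigenvalue_bound:
  fixes A :: "nat \<Rightarrow> nat \<Rightarrow> real"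
  assumes sym: "\<And>i j. i < D \<Longrightarrow> j < D \<Longrightarrow> A i j = A j i"
    and eig: "\<And>\<mu> v. \<exists>i<D. v i \<noteq> 0 \<Longrightarrow> \<forall>i<D. (\<Sum>j<D. A i j * v j) = \<mu> * v i \<Longrightarrow> lam \<le> \<mu>"
  shows "lam * (\<Sum>i<D. (w i)\<^sup>2) \<le> (\<Sum>i<D. w i * (\<Sum>j<D. A i j * w j))"
proof (cases "D = 0")
  case False
  then obtain v where v: "(\<Sum>i<D. (v i)\<^sup>2) = 1"
    and lower: "\<And>y. (\<Sum>i<D. v i * (\<Sum>j<D. A i j * v j)) * (\<Sum>i<D. (y i)\<^sup>2)
              \<le> (\<Sum>i<D. y i * (\<Sum>j<D. A i j * y j))"
    using quadratic_form_attains_min_on_sphere by blast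
  define m where "m = (\<Sum>i<D. v i * (\<Sum>j<D. A i j * v j))"
  have "\<exists>i<D. v i \<noteq> 0"
    using v by (metis (no_types, lifting) sum.neutral zero_neq_one zero_power2 lessThan_iff)
  moreover have "\<forall>i<D. (\<Sum>j<D. A i j * v j) = m * v i"
  proof (intro allI impI)
    fix i assume "i < D"
    have "m * (\<Sum>i<D. (y i)\<^sup>2) \<le> (\<Sum>i<D. y i * (\<Sum>j<D. A i j * y j))" for y
      using lower[of y] by (simp add: m_def mult.commute)
    moreover have "(\<Sum>i<D. v i * (\<Sum>j<D. A i j * v j)) = m * (\<Sum>i<D. (v i)\<^sup>2)"
      using v by (simp add: m_def)
    ultimately show "(\<Sum>j<D. A i j * v j) = m * v i"
      using quadratic_form_minimiser_eigenvector[where D=D and A=A and m=m and v=v] sym \<open>i < D\<close>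
      by blast
  qed
  ultimately have "lam \<le> m" by (rule eig)
  then have "lam * (\<Sum>i<D. (w i)\<^sup>2) \<le> m * (\<Sum>i<D. (w i)\<^sup>2)"
    by (intro mult_right_mono sum_nonneg) auto
  also have "\<dots> \<le> (\<Sum>i<D. w i * (\<Sum>j<D. A i j * w j))" using lower by (simp add: m_def)
  finally show ?thesis .
qed simp

section \<open>Euclidean norm and inverses of symmetric matrices\<close>

definition vec_norm :: "real vec \<Rightarrow> real" where
  "vec_norm v = L2_set (\<lambda>i. v $ i) {..<dim_vec v}"

lemma vec_norm_nonneg: "0 \<le> vec_norm v"
  by (simp add: vec_norm_def)

lemma scalar_prod_self_eq_vec_norm_sq: "v \<bullet> v = (vec_norm v)\<^sup>2"
  by (simp add: vec_norm_def L2_set_def sum_nonneg scalar_prod_def atLeast0LessThan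
      power2_eq_square)

lemma abs_vec_index_le_vec_norm: "i < dim_vec v \<Longrightarrow> \<bar>v $ i\<bar> \<le> vec_norm v"
  unfolding vec_norm_def using member_le_L2_set[of "{..<dim_vec v}" i "\<lambda>i. \<bar>v $ i\<bar>"]
  by (simp add: L2_set_def)

lemma abs_scalar_prod_le_vec_norm:
  assumes "dim_vec w = dim_vec v"
  shows "\<bar>v \<bullet> w\<bar> \<le> vec_norm v * vec_norm w"
proof -
  have "\<bar>v \<bullet> w\<bar> \<le> (\<Sum>i<dim_vec v. \<bar>v $ i\<bar> * \<bar>w $ i\<bar>)"
    using assms by (auto simp: scalar_prod_def atLeast0LessThan abs_mult[symmetric] intro: sum_abs)
  also have "\<dots> \<le> vec_norm v * vec_norm w"
    using assms unfolding vec_norm_def by (simp add: L2_set_mult_ineq)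
  finally show ?thesis .
qed

lemma vec_norm_add_le:
  assumes "dim_vec w = dim_vec v"
  shows "vec_norm (v + w) \<le> vec_norm v + vec_norm w"
proof -
  have "vec_norm (v + w) = L2_set (\<lambda>i. v $ i + w $ i) {..<dim_vec v}"
    using assms by (auto simp: vec_norm_def intro!: L2_set_cong)
  then show ?thesis using assms by (simp add: vec_norm_def L2_set_triangle_ineq)
qed

lemma vec_norm_le_entrywise:
  assumes "\<And>i. i < dim_vec v \<Longrightarrow> \<bar>v $ i\<bar> \<le> f i"
  shows "vec_norm v \<le> L2_set f {..<dim_vec v}"
proof -
  have "vec_norm v = L2_set (\<lambda>i. \<bar>v $ i\<bar>) {..<dim_vec v}"
    by (simp add: vec_norm_def L2_set_def)
  also have "\<dots> \<le> L2_set f {..<dim_vec v}"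
    using assms by (intro L2_set_mono) auto
  finally show ?thesis .
qed

lemma vec_norm_mult_mat_vec_le:
  fixes M :: "real mat"
  assumes M: "M \<in> carrier_mat D D" and v: "v \<in> carrier_vec D"
    and entries: "\<And>i j. i < D \<Longrightarrow> j < D \<Longrightarrow> \<bar>M $$ (i, j)\<bar> \<le> c"
  shows "vec_norm (M *\<^sub>v v) \<le> real D * c * vec_norm v"
proof (cases "D = 0")
  case False
  then have c: "0 \<le> c" using entries[of 0 0] by linarith
  have row: "\<bar>(M *\<^sub>v v) $ i\<bar> \<le> sqrt (real D) * c * vec_norm v" if "i < D" for i
  proof -
    have "\<bar>(M *\<^sub>v v) $ i\<bar> = \<bar>row M i \<bullet> v\<bar>" using M that by simp
    also have "\<dots> \<le> vec_norm (row M i) * vec_norm v"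
      using M v by (intro abs_scalar_prod_le_vec_norm) simp
    also have "\<dots> \<le> L2_set (\<lambda>j. c) {..<D} * vec_norm v"
      using M entries that
      by (intro mult_right_mono vec_norm_nonneg
          order_trans[OF vec_norm_le_entrywise[where f="\<lambda>j. c"]]) auto
    finally show ?thesis using c by (simp add: L2_set_constant)
  qed
  have "vec_norm (M *\<^sub>v v) \<le> L2_set (\<lambda>i. sqrt (real D) * c * vec_norm v) {..<D}"
    using vec_norm_le_entrywise[of "M *\<^sub>v v"] M row by simp
  also have "\<dots> = real D * c * vec_norm v"
    using c vec_norm_nonneg[of v] by (simp add: L2_set_constant mult.assoc[symmetric])
  finally show ?thesis .
qed (use M in \<open>simp add: vec_norm_def\<close>)

lemma scalar_prod_mult_mat_vec_ge_eigenvalue_bound: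
  fixes A :: "real mat"
  assumes A: "A \<in> carrier_mat D D" and sym: "transpose_mat A = A"
    and eig: "\<And>\<mu>. eigenvalue A \<mu> \<Longrightarrow> lam \<le> \<mu>"
    and v: "v \<in> carrier_vec D"
  shows "lam * (v \<bullet> v) \<le> v \<bullet> (A *\<^sub>v v)"
proof -
  have entry_sym: "A $$ (i, j) = A $$ (j, i)" if "i < D" "j < D" for i j
    using A that by (metis carrier_matD index_transpose_mat(1) sym)
  have "lam \<le> \<mu>"
    if nonzero: "\<exists>i<D. f i \<noteq> 0" and eq: "\<forall>i<D. (\<Sum>j<D. A $$ (i, j) * f j) = \<mu> * f i" for \<mu> f
  proof -
    have "vec D f \<noteq> 0\<^sub>v D" using nonzero by (auto simp: vec_eq_iff)
    moreover have "A *\<^sub>v vec D f = \<mu> \<cdot>\<^sub>v vec D f"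
      using A eq by (auto simp: scalar_prod_def atLeast0LessThan intro!: eq_vecI)
    ultimately have "eigenvector A (vec D f) \<mu>" using A by (simp add: eigenvector_def)
    then show ?thesis using eig by (auto simp: eigenvalue_def)
  qed
  then have "lam * (\<Sum>i<D. (v $ i)\<^sup>2) \<le> (\<Sum>i<D. v $ i * (\<Sum>j<D. A $$ (i, j) * v $ j))"
    using entry_sym by (intro quadratic_form_ge_eigenvalue_bound) auto
  then show ?thesis
    using A v by (simp add: scalar_prod_def atLeast0LessThan power2_eq_square)
qed

lemma mat_inverse_exists_if_eigenvalues_pos:
  fixes A :: "real mat"
  assumes A: "A \<in> carrier_mat D D"
    and eig: "\<And>\<mu>. eigenvalue A \<mu> \<Longrightarrow> lam \<le> \<mu>" and lam: "0 < lam"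
  obtains B where "mat_inverse A = Some B" "B \<in> carrier_mat D D" "A * B = 1\<^sub>m D" "B * A = 1\<^sub>m D"
proof (cases "mat_inverse A")
  case None
  then have "det A = 0" using mat_inverse(1)[OF A] det_non_zero_imp_unit[OF A] by metis
  then obtain v where v: "v \<in> carrier_vec D" "v \<noteq> 0\<^sub>v D" "A *\<^sub>v v = 0\<^sub>v D"
    using det_0_iff_vec_prod_zero[OF A] by blast
  moreover have "0 \<cdot>\<^sub>v v = 0\<^sub>v D" using v by auto
  ultimately have "eigenvalue A 0" using A by (auto simp: eigenvalue_def eigenvector_def)
  then show thesis using eig lam by force
next
  case (Some B)
  then show thesis using mat_inverse(2)[OF A] that by auto
qed

lemma vec_norm_inverse_mult_vec_le:
  fixes A B :: "real mat"
  assumes A: "A \<in> carrier_mat D D" and sym: "transpose_mat A = A"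
    and eig: "\<And>\<mu>. eigenvalue A \<mu> \<Longrightarrow> lam \<le> \<mu>" and lam: "0 < lam"
    and B: "B \<in> carrier_mat D D" "A * B = 1\<^sub>m D"
    and y: "y \<in> carrier_vec D"
  shows "vec_norm (B *\<^sub>v y) \<le> vec_norm y / lam"
proof -
  define v where "v = B *\<^sub>v y"
  have v: "v \<in> carrier_vec D" using B y by (simp add: v_def)
  have "A *\<^sub>v v = y"
    using A B y by (simp add: v_def assoc_mult_mat_vec[symmetric])
  then have "lam * (vec_norm v)\<^sup>2 \<le> v \<bullet> y"
    using scalar_prod_mult_mat_vec_ge_eigenvalue_bound[OF A sym eig v]
    by (simp add: scalar_prod_self_eq_vec_norm_sq)
  also have "\<dots> \<le> vec_norm v * vec_norm y"
    using abs_scalar_prod_le_vec_norm[of y v] v y by simp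
  finally have "lam * (vec_norm v)\<^sup>2 \<le> vec_norm v * vec_norm y" .
  then have "vec_norm v * lam \<le> vec_norm y"
    using vec_norm_nonneg[of v] vec_norm_nonneg[of y]
    by (cases "vec_norm v = 0") (auto simp: power2_eq_square mult_ac)
  then show ?thesis using lam by (simp add: v_def field_simps)
qed

lemma inverse_mult_vec_diff:
  fixes P Q X Y :: "real mat"
  assumes P: "P \<in> carrier_mat D D" and Q: "Q \<in> carrier_mat D D"
    and X: "X \<in> carrier_mat D D" and Y: "Y \<in> carrier_mat D D"
    and x: "x \<in> carrier_vec D" and y: "y \<in> carrier_vec D"
    and PX: "P * X = 1\<^sub>m D" and YQ: "Y * Q = 1\<^sub>m D"
  shows "P *\<^sub>v x - Q *\<^sub>v y = P *\<^sub>v ((x - y) + (Y - X) *\<^sub>v (Q *\<^sub>v y))"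
proof -
  define w where "w = Q *\<^sub>v y"
  have w: "w \<in> carrier_vec D" using Q y by (simp add: w_def)
  have Yw: "Y *\<^sub>v w = y"
    using Y Q y by (simp add: w_def assoc_mult_mat_vec[symmetric] YQ)
  have PXw: "P *\<^sub>v (X *\<^sub>v w) = w"
    using P X w by (simp add: assoc_mult_mat_vec[symmetric] PX)
  have "(x - y) + (Y - X) *\<^sub>v w = x - X *\<^sub>v w"
    using X Y x y w by (auto simp: minus_mult_distrib_mat_vec Yw intro!: eq_vecI)
  then have "P *\<^sub>v ((x - y) + (Y - X) *\<^sub>v w) = P *\<^sub>v x - w"
    using P X x w by (simp add: mult_minus_distrib_mat_vec PXw)
  then show ?thesis by (simp add: w_def)
qed

lemma abs_power_diff_le:
  fixes u v :: real
  assumes "\<bar>u\<bar> \<le> 1" "\<bar>v\<bar> \<le> 1"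
  shows "\<bar>u ^ i - v ^ i\<bar> \<le> real i * \<bar>u - v\<bar>"
proof (induction i)
  case (Suc i)
  have "\<bar>u ^ Suc i - v ^ Suc i\<bar> = \<bar>u * (u ^ i - v ^ i) + v ^ i * (u - v)\<bar>"
    by (simp add: algebra_simps)
  also have "\<dots> \<le> \<bar>u\<bar> * \<bar>u ^ i - v ^ i\<bar> + \<bar>v\<bar> ^ i * \<bar>u - v\<bar>"
    by (metis abs_mult abs_triangle_ineq power_abs)
  also have "\<dots> \<le> 1 * (real i * \<bar>u - v\<bar>) + 1 * \<bar>u - v\<bar>"
    using assms Suc.IH by (intro add_mono mult_mono power_le_one) auto
  finally show ?case by (simp add: algebra_simps)
qed simp

lemma L2_set_inverse_fact_le: "L2_set (\<lambda>i. 1 / fact i) {..<m} \<le> sqrt (exp (1 :: real))"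
proof -
  have "(\<Sum>i<m. (1 / fact i)\<^sup>2) \<le> (\<Sum>i<m. 1 / fact i :: real)"
  proof (intro sum_mono)
    fix i
    have "1 / fact i \<le> (1 :: real)" "0 \<le> 1 / (fact i :: real)" by simp_all
    then show "(1 / fact i)\<^sup>2 \<le> (1 / fact i :: real)"
      by (metis power2_eq_square mult_left_le)
  qed
  also have "\<dots> \<le> (\<Sum>i. 1 / fact i)"
    using summable_exp_generic[of "1 :: real"] by (intro sum_le_suminf) (auto simp: divide_inverse)
  also have "\<dots> = exp 1" by (simp add: exp_def divide_inverse)
  finally show ?thesis unfolding L2_set_def by (rule real_sqrt_le_mono)
qed

lemma L2_set_of_nat_div_fact_le: "L2_set (\<lambda>i. real i / fact i) {..<m} \<le> sqrt (exp (1 :: real))"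
proof (cases m)
  case (Suc k)
  have "(\<Sum>i<m. (real i / fact i)\<^sup>2) = (\<Sum>i<k. (1 / fact i)\<^sup>2)"
    unfolding Suc sum.lessThan_Suc_shift by (simp add: fact_Suc del: of_nat_Suc)
  then show ?thesis using L2_set_inverse_fact_le[of k] by (simp add: L2_set_def)
qed simp

lemma card_design_points_interval:
  assumes "n \<ge> 1" "L \<ge> 0"
  shows "real (card {l \<in> {1..n}. \<alpha> \<le> xpt n l \<and> xpt n l \<le> \<alpha> + L}) \<le> real n * L + 1"
proof -
  define S where "S = {l \<in> {1..n}. \<alpha> \<le> xpt n l \<and> xpt n l \<le> \<alpha> + L}"
  have "real (card S) \<le> real n * L + 1"
  proof (cases "S = {}")
    case False
    have fin: "finite S" by (simp add: S_def)
    have "S \<subseteq> {Min S..Max S}" using fin by auto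
    then have "card S \<le> Suc (Max S) - Min S"
      using card_mono[of "{Min S..Max S}" S] by simp
    moreover have "Min S \<le> Max S" using Max_ge[OF fin Min_in[OF fin False]] .
    ultimately have "real (card S) \<le> real (Max S) + 1 - real (Min S)"
      by (simp add: of_nat_diff)
    moreover have "xpt n (Max S) \<le> \<alpha> + L" "\<alpha> \<le> xpt n (Min S)"
      using Max_in[OF fin False] Min_in[OF fin False] by (auto simp: S_def)
    then have "(real (Max S) - real (Min S)) / real n \<le> L"
      by (simp add: xpt_def diff_divide_distrib)
    then have "real (Max S) - real (Min S) \<le> real n * L"
      using assms by (simp add: divide_le_eq mult.commute)
    ultimately show ?thesis by simp
  qed (use assms in simp)
  then show ?thesis by (simp add: S_def)
qed

lemma sum_le_card_support_mult:
  fixes f :: "'a \<Rightarrow> real"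
  assumes "finite I" "\<And>l. l \<in> I \<Longrightarrow> l \<notin> J \<Longrightarrow> f l = 0" "\<And>l. l \<in> I \<Longrightarrow> l \<in> J \<Longrightarrow> f l \<le> M"
  shows "(\<Sum>l\<in>I. f l) \<le> real (card (I \<inter> J)) * M"
proof -
  have "(\<Sum>l\<in>I. f l) = (\<Sum>l\<in>I \<inter> J. f l)"
    using assms by (intro sum.mono_neutral_right) auto
  also have "\<dots> \<le> real (card (I \<inter> J)) * M"
    using assms by (intro sum_bounded_above) auto
  finally show ?thesis .
qed

lemma weighted_square_le_four_square:
  fixes \<rho> A X :: real
  assumes "0 \<le> \<rho>" "\<rho> \<le> 17 / 4" "0 \<le> A" "A \<le> 4 * X"
  shows "\<rho> * (A + \<rho> * X)\<^sup>2 \<le> 4 * (A + 8 * X)\<^sup>2"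
proof -
  have "0 \<le> X" using assms by linarith
  then have "A + \<rho> * X \<le> 19 / 20 * (A + 8 * X)"
    using assms mult_right_mono[OF assms(2) \<open>0 \<le> X\<close>] by (simp add: algebra_simps)
  moreover have "0 \<le> A + \<rho> * X" using assms \<open>0 \<le> X\<close> by simp
  ultimately have "(A + \<rho> * X)\<^sup>2 \<le> (19 / 20 * (A + 8 * X))\<^sup>2"
    by (rule power_mono)
  then have "(A + \<rho> * X)\<^sup>2 \<le> (19 / 20)\<^sup>2 * (A + 8 * X)\<^sup>2"
    by (simp only: power_mult_distrib)
  then have "\<rho> * (A + \<rho> * X)\<^sup>2 \<le> 17 / 4 * ((19 / 20)\<^sup>2 * (A + 8 * X)\<^sup>2)"
    using assms by (intro mult_mono) auto
  also have "\<dots> = (17 / 4 * (19 / 20)\<^sup>2) * (A + 8 * X)\<^sup>2"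
    by (rule mult.assoc[symmetric])
  also have "\<dots> \<le> 4 * (A + 8 * X)\<^sup>2"
    by (intro mult_right_mono) (simp_all add: power2_eq_square)
  finally show ?thesis .
qed

section \<open>Bounded Lipschitz kernels\<close>

lemma dim_Uvec [simp]: "dim_vec (Uvec \<beta> u) = lp_order \<beta> + 1"
  by (simp add: Uvec_def)

lemma index_Uvec [simp]: "i < lp_order \<beta> + 1 \<Longrightarrow> Uvec \<beta> u $ i = u ^ i / fact i"
  by (simp add: Uvec_def)

lemma abs_power_div_fact_le: "\<bar>u\<bar> \<le> 1 \<Longrightarrow> \<bar>u ^ i / fact i\<bar> \<le> 1 / (fact i :: real)"
  by (simp add: power_abs power_le_one abs_divide divide_right_mono)

lemma abs_power_div_fact_diff_le:
  "\<bar>u\<bar> \<le> 1 \<Longrightarrow> \<bar>v\<bar> \<le> 1 \<Longrightarrow> \<bar>u ^ i / fact i - v ^ i / fact i\<bar> \<le> real i / fact i * \<bar>u - v\<bar>"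
  using abs_power_diff_le[of u v i]
  by (simp add: diff_divide_distrib[symmetric] abs_divide divide_right_mono)

lemma of_nat_div_fact_le_1: "real i / fact i \<le> 1"
  using fact_ge_self[of i] by (simp add: divide_le_eq_1) (metis of_nat_fact of_nat_le_iff)

locale bounded_lipschitz_kernel =
  fixes K :: "real \<Rightarrow> real" and Kmax LK :: real
  assumes K_nonneg: "\<And>u. 0 \<le> K u"
    and K_vanishes: "\<And>u. 1 < \<bar>u\<bar> \<Longrightarrow> K u = 0"
    and K_le: "\<And>u. K u \<le> Kmax"
    and K_lipschitz: "lipschitz_on LK UNIV K"
begin

lemma Kmax_nonneg: "0 \<le> Kmax"
  using K_nonneg[of 0] K_le[of 0] by linarith

lemma LK_nonneg: "0 \<le> LK"
  using K_lipschitz lipschitz_on_nonneg by blast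

lemma abs_K_diff_le: "\<bar>K u - K v\<bar> \<le> LK * \<bar>u - v\<bar>"
  using K_lipschitz by (auto dest!: lipschitz_onD simp: dist_real_def)

lemma abs_mult_K_diff_le:
  fixes p :: "real \<Rightarrow> real"
  assumes bound: "\<And>w. \<bar>w\<bar> \<le> 1 \<Longrightarrow> \<bar>p w\<bar> \<le> M"
    and lip: "\<And>u v. \<bar>u\<bar> \<le> 1 \<Longrightarrow> \<bar>v\<bar> \<le> 1 \<Longrightarrow> \<bar>p u - p v\<bar> \<le> L * \<bar>u - v\<bar>"
  shows "\<bar>p u * K u - p v * K v\<bar> \<le> (Kmax * L + M * LK) * \<bar>u - v\<bar>"
proof -
  have M: "0 \<le> M" using bound[of 0] by simp
  have L: "0 \<le> L" using lip[of 1 0] by simp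
  then have extra: "0 \<le> Kmax * L * \<bar>u - v\<bar>" using Kmax_nonneg by simp
  have one_inside: "\<bar>p w * K w - p z * K z\<bar> \<le> M * LK * \<bar>w - z\<bar>" if "\<bar>w\<bar> \<le> 1" "1 < \<bar>z\<bar>" for w z
  proof -
    have "\<bar>p w * K w - p z * K z\<bar> = \<bar>p w\<bar> * \<bar>K w - K z\<bar>"
      using that K_vanishes by (simp add: abs_mult)
    also have "\<dots> \<le> M * (LK * \<bar>w - z\<bar>)"
      using that bound abs_K_diff_le M by (intro mult_mono) auto
    finally show ?thesis by simp
  qed
  consider "\<bar>u\<bar> \<le> 1" "\<bar>v\<bar> \<le> 1" | "\<bar>u\<bar> \<le> 1" "1 < \<bar>v\<bar>" | "1 < \<bar>u\<bar>" "\<bar>v\<bar> \<le> 1"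
    | "1 < \<bar>u\<bar>" "1 < \<bar>v\<bar>" by linarith
  then show ?thesis
  proof cases
    case 1
    have "\<bar>p u * K u - p v * K v\<bar> = \<bar>(p u - p v) * K u + p v * (K u - K v)\<bar>"
      by (simp add: algebra_simps)
    also have "\<dots> \<le> \<bar>p u - p v\<bar> * K u + \<bar>p v\<bar> * \<bar>K u - K v\<bar>"
      using K_nonneg by (metis abs_mult abs_of_nonneg abs_triangle_ineq)
    also have "\<dots> \<le> (L * \<bar>u - v\<bar>) * Kmax + M * (LK * \<bar>u - v\<bar>)"
      using 1 lip bound K_le K_nonneg abs_K_diff_le L M by (intro add_mono mult_mono) auto
    finally show ?thesis by (simp add: algebra_simps)
  next
    case 2
    then show ?thesis using one_inside[of u v] extra by (simp add: algebra_simps)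
  next
    case 3
    then show ?thesis using one_inside[of v u] extra by (simp add: abs_minus_commute algebra_simps)
  next
    case 4
    have "0 \<le> (Kmax * L + M * LK) * \<bar>u - v\<bar>" using Kmax_nonneg L LK_nonneg M by simp
    with 4 show ?thesis by (simp add: K_vanishes)
  qed
qed

lemma vec_norm_kernel_Uvec_le: "vec_norm (K u \<cdot>\<^sub>v Uvec \<beta> u) \<le> sqrt (exp 1) * Kmax"
proof -
  have "vec_norm (K u \<cdot>\<^sub>v Uvec \<beta> u) \<le> L2_set (\<lambda>i. Kmax * (1 / fact i)) {..<lp_order \<beta> + 1}"
  proof (intro order_trans[OF vec_norm_le_entrywise[where f="\<lambda>i. Kmax * (1 / fact i)"]])
    fix i assume "i < dim_vec (K u \<cdot>\<^sub>v Uvec \<beta> u)"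
    then have "\<bar>(K u \<cdot>\<^sub>v Uvec \<beta> u) $ i\<bar> = K u * \<bar>u ^ i / fact i\<bar>"
      using K_nonneg by (simp add: abs_mult)
    also have "\<dots> \<le> Kmax * (1 / fact i)"
    proof (cases "\<bar>u\<bar> \<le> 1")
      case True
      show ?thesis
        by (rule mult_mono[OF K_le abs_power_div_fact_le[OF True] Kmax_nonneg abs_ge_zero])
    qed (simp add: K_vanishes Kmax_nonneg)
    finally show "\<bar>(K u \<cdot>\<^sub>v Uvec \<beta> u) $ i\<bar> \<le> Kmax * (1 / fact i)" .
  qed simp
  also have "\<dots> = Kmax * L2_set (\<lambda>i. 1 / fact i) {..<lp_order \<beta> + 1}"
    using Kmax_nonneg by (simp add: L2_set_right_distrib)
  also have "\<dots> \<le> Kmax * sqrt (exp 1)"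
    using Kmax_nonneg L2_set_inverse_fact_le by (rule mult_left_mono[rotated])
  finally show ?thesis by (simp add: mult.commute)
qed

lemma vec_norm_kernel_Uvec_diff_le:
  "vec_norm (K u \<cdot>\<^sub>v Uvec \<beta> u - K v \<cdot>\<^sub>v Uvec \<beta> v) \<le> sqrt (exp 1) * (LK + Kmax) * \<bar>u - v\<bar>"
proof -
  define D where "D = lp_order \<beta> + 1"
  have "vec_norm (K u \<cdot>\<^sub>v Uvec \<beta> u - K v \<cdot>\<^sub>v Uvec \<beta> v)
      \<le> L2_set (\<lambda>i. (Kmax * (real i / fact i) + 1 / fact i * LK) * \<bar>u - v\<bar>) {..<D}"
  proof (intro order_trans[OF vec_norm_le_entrywise])
    fix i assume "i < dim_vec (K u \<cdot>\<^sub>v Uvec \<beta> u - K v \<cdot>\<^sub>v Uvec \<beta> v)"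
    then have "i < D" by (simp add: D_def)
    then show "\<bar>(K u \<cdot>\<^sub>v Uvec \<beta> u - K v \<cdot>\<^sub>v Uvec \<beta> v) $ i\<bar>
        \<le> (Kmax * (real i / fact i) + 1 / fact i * LK) * \<bar>u - v\<bar>"
      using abs_mult_K_diff_le[of "\<lambda>w. w ^ i / fact i", OF abs_power_div_fact_le
          abs_power_div_fact_diff_le]
      by (simp add: D_def mult.commute)
  qed (simp add: D_def)
  also have "\<dots> = \<bar>u - v\<bar> * L2_set (\<lambda>i. Kmax * (real i / fact i) + LK * (1 / fact i)) {..<D}"
    by (simp add: L2_set_right_distrib mult.commute)
  also have "\<dots> \<le> \<bar>u - v\<bar> * (Kmax * L2_set (\<lambda>i. real i / fact i) {..<D}
                                + LK * L2_set (\<lambda>i. 1 / fact i) {..<D})"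
    using L2_set_triangle_ineq[of "\<lambda>i. Kmax * (real i / fact i)" "\<lambda>i. LK * (1 / fact i)"]
      Kmax_nonneg LK_nonneg
    by (intro mult_left_mono) (simp_all add: L2_set_right_distrib)
  also have "\<dots> \<le> \<bar>u - v\<bar> * (Kmax * sqrt (exp 1) + LK * sqrt (exp 1))"
    using Kmax_nonneg LK_nonneg L2_set_inverse_fact_le L2_set_of_nat_div_fact_le
    by (intro mult_left_mono add_mono) simp_all
  finally show ?thesis by (simp add: algebra_simps)
qed

lemma abs_moment_diff_le:
  "\<bar>u ^ i / fact i * (u ^ j / fact j) * K u - v ^ i / fact i * (v ^ j / fact j) * K v\<bar>
     \<le> (2 * Kmax + LK) * \<bar>u - v\<bar>"
proof -
  define p where "p w = w ^ i / fact i * (w ^ j / fact j)" for w :: real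
  have factor: "\<bar>w ^ k / fact k\<bar> \<le> 1" if "\<bar>w\<bar> \<le> 1" for w :: real and k
    by (rule order_trans[OF abs_power_div_fact_le[OF that]]) simp
  have bound: "\<bar>p w\<bar> \<le> 1" if "\<bar>w\<bar> \<le> 1" for w
    using factor[OF that, of i] factor[OF that, of j]
    unfolding p_def abs_mult by (intro mult_le_one) auto
  have "\<bar>p u - p v\<bar> \<le> 2 * \<bar>u - v\<bar>" if "\<bar>u\<bar> \<le> 1" "\<bar>v\<bar> \<le> 1" for u v
  proof -
    have "\<bar>p u - p v\<bar> = \<bar>(u ^ i / fact i - v ^ i / fact i) * (u ^ j / fact j)
                        + v ^ i / fact i * (u ^ j / fact j - v ^ j / fact j)\<bar>"
      by (simp add: p_def algebra_simps)
    also have "\<dots> \<le> real i / fact i * \<bar>u - v\<bar> * 1 + 1 * (real j / fact j * \<bar>u - v\<bar>)"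
      unfolding abs_mult
      by (intro order_trans[OF abs_triangle_ineq] add_mono, unfold abs_mult)
         (intro mult_mono abs_power_div_fact_diff_le factor that; simp)+
    also have "\<dots> \<le> 1 * \<bar>u - v\<bar> + 1 * \<bar>u - v\<bar>"
      using mult_right_mono[OF of_nat_div_fact_le_1 abs_ge_zero] by (intro add_mono) simp_all
    finally show ?thesis by simp
  qed
  then show ?thesis using abs_mult_K_diff_le[of p 1 2 u v] bound by (simp add: p_def algebra_simps)
qed

end

section \<open>Weights of the local polynomial estimator\<close>

lemma scalar_prod_Uvec_zero:
  "z \<in> carrier_vec (lp_order \<beta> + 1) \<Longrightarrow> Uvec \<beta> 0 \<bullet> z = z $ 0"
proof -
  assume z: "z \<in> carrier_vec (lp_order \<beta> + 1)"
  have "Uvec \<beta> 0 \<bullet> z = (\<Sum>i\<in>{0..<lp_order \<beta> + 1}. Uvec \<beta> 0 $ i * z $ i)"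
    using z by (simp add: scalar_prod_def)
  also have "\<dots> = (\<Sum>i\<in>{0..<lp_order \<beta> + 1}. if i = 0 then z $ 0 else 0)"
    by (intro sum.cong) auto
  also have "\<dots> = z $ 0" by simp
  finally show ?thesis .
qed

locale local_poly_design = bounded_lipschitz_kernel +
  fixes \<beta> h lam0 :: real and n :: nat
  assumes beta_pos: "0 < \<beta>"
    and n_pos: "1 \<le> n"
    and h_ge: "1 / (2 * real n) \<le> h"
    and lam0_pos: "0 < lam0"
    and eigenvalues_ge: "\<And>x \<mu>. x \<in> {0..1} \<Longrightarrow> eigenvalue (Bmat K \<beta> n h x) \<mu> \<Longrightarrow> lam0 \<le> \<mu>"
begin

abbreviation D :: nat where "D \<equiv> lp_order \<beta> + 1"

abbreviation B :: "real \<Rightarrow> real mat" where "B x \<equiv> Bmat K \<beta> n h x"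

abbreviation kvec :: "real \<Rightarrow> nat \<Rightarrow> real vec" where
  "kvec x k \<equiv> K ((xpt n k - x) / h) \<cdot>\<^sub>v Uvec \<beta> ((xpt n k - x) / h)"

text \<open>Only meaningful for \<open>x \<in> {0..1}\<close>, where the eigenvalue hypothesis makes \<open>B x\<close>
  invertible.\<close>
definition Binv :: "real \<Rightarrow> real mat" where
  "Binv x = the (mat_inverse (B x))"

definition window :: "real \<Rightarrow> nat set" where
  "window x = {l \<in> {1..n}. \<bar>xpt n l - x\<bar> \<le> h}"

lemma kvec_carrier: "kvec x k \<in> carrier_vec D"
  by (simp add: carrier_vecI)

lemma h_pos: "0 < h"
proof -
  have "0 < 1 / (2 * real n)" using n_pos by simp
  then show ?thesis using h_ge by linarith
qed

lemma nh_ge: "1 \<le> 2 * (real n * h)"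
  using h_ge n_pos by (simp add: field_simps)

lemma inverse_nh_le_2: "1 / (real n * h) \<le> 2"
  using nh_ge h_pos n_pos by (simp add: divide_le_eq)

lemma one_less_abs_div_h: "h < \<bar>t\<bar> \<Longrightarrow> 1 < \<bar>t / h\<bar>"
  using h_pos by (simp add: abs_divide)

lemma not_in_window: "l \<in> {1..n} \<Longrightarrow> l \<notin> window x \<Longrightarrow> h < \<bar>xpt n l - x\<bar>"
  by (simp add: window_def)

lemma Int_window: "{1..n} \<inter> window x = window x"
  by (auto simp: window_def)

lemma D_eq_ceiling: "real D = of_int \<lceil>\<beta>\<rceil>"
  using beta_pos by (simp add: lp_order_def)

lemma carrier_Bmat: "B x \<in> carrier_mat D D"
  by (simp add: Bmat_def)

lemma index_Bmat:
  "i < D \<Longrightarrow> j < D \<Longrightarrow> B x $$ (i, j) = 1 / (real n * h) *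
     (\<Sum>l = 1..n. ((xpt n l - x) / h) ^ i / fact i * (((xpt n l - x) / h) ^ j / fact j)
                   * K ((xpt n l - x) / h))"
  by (simp add: Bmat_def ac_simps)

lemma transpose_Bmat: "transpose_mat (B x) = B x"
proof (rule eq_matI)
  fix i j assume "i < dim_row (B x)" "j < dim_col (B x)"
  then show "transpose_mat (B x) $$ (i, j) = B x $$ (i, j)"
    using carrier_matD[OF carrier_Bmat] by (simp add: index_Bmat ac_simps)
qed (use carrier_matD[OF carrier_Bmat] in simp_all)

lemma Binv:
  assumes "x \<in> {0..1}"
  shows "mat_inverse (B x) = Some (Binv x)" "Binv x \<in> carrier_mat D D"
    "B x * Binv x = 1\<^sub>m D" "Binv x * B x = 1\<^sub>m D"
proof -
  obtain P where "mat_inverse (B x) = Some P" "P \<in> carrier_mat D D"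
      "B x * P = 1\<^sub>m D" "P * B x = 1\<^sub>m D"
    using mat_inverse_exists_if_eigenvalues_pos[OF carrier_Bmat eigenvalues_ge[OF assms] lam0_pos] .
  then show "mat_inverse (B x) = Some (Binv x)" "Binv x \<in> carrier_mat D D"
    "B x * Binv x = 1\<^sub>m D" "Binv x * B x = 1\<^sub>m D"
    by (simp_all add: Binv_def)
qed

lemma vec_norm_Binv_mult_le:
  assumes "x \<in> {0..1}" "y \<in> carrier_vec D"
  shows "vec_norm (Binv x *\<^sub>v y) \<le> vec_norm y / lam0"
  by (rule vec_norm_inverse_mult_vec_le[OF carrier_Bmat transpose_Bmat eigenvalues_ge[OF assms(1)]
        lam0_pos Binv(2,3)[OF assms(1)] assms(2)])

lemma Wnk_eq:
  assumes "x \<in> {0..1}"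
  shows "Wnk K \<beta> n h k x = 1 / (real n * h) * (Binv x *\<^sub>v kvec x k) $ 0"
proof -
  define u where "u = (xpt n k - x) / h"
  have "Binv x *\<^sub>v Uvec \<beta> u \<in> carrier_vec D" using Binv(2)[OF assms] by (simp add: carrier_vecI)
  moreover from this have "dim_vec (Binv x *\<^sub>v Uvec \<beta> u) = D" by (rule carrier_vecD)
  ultimately have "Uvec \<beta> 0 \<bullet> (Binv x *\<^sub>v Uvec \<beta> u) * K u = (K u \<cdot>\<^sub>v (Binv x *\<^sub>v Uvec \<beta> u)) $ 0"
    by (simp add: scalar_prod_Uvec_zero mult.commute del: dim_mult_mat_vec)
  also have "K u \<cdot>\<^sub>v (Binv x *\<^sub>v Uvec \<beta> u) = Binv x *\<^sub>v (K u \<cdot>\<^sub>v Uvec \<beta> u)"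
    using Binv(2)[OF assms] by (simp add: mult_mat_vec carrier_vecI)
  finally show ?thesis by (simp add: Wnk_def Binv(1)[OF assms] u_def)
qed

lemma Wnk_eq_0:
  assumes "h < \<bar>xpt n k - x\<bar>"
  shows "Wnk K \<beta> n h k x = 0"
proof -
  have "1 < \<bar>(xpt n k - x) / h\<bar>"
    using assms by (rule one_less_abs_div_h)
  then show ?thesis unfolding Wnk_def by (simp only: K_vanishes mult_zero_right)
qed

lemma vec_norm_Binv_kvec_le:
  "x \<in> {0..1} \<Longrightarrow> vec_norm (Binv x *\<^sub>v kvec x k) \<le> sqrt (exp 1) * Kmax / lam0"
  using vec_norm_Binv_mult_le[OF _ kvec_carrier] vec_norm_kernel_Uvec_le lam0_pos
  by (meson divide_right_mono less_imp_le order_trans)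

lemma abs_Wnk_le:
  assumes "x \<in> {0..1}"
  shows "\<bar>Wnk K \<beta> n h k x\<bar> \<le> 1 / (real n * h) * (sqrt (exp 1) * Kmax / lam0)"
proof -
  have "\<bar>(Binv x *\<^sub>v kvec x k) $ 0\<bar> \<le> sqrt (exp 1) * Kmax / lam0"
    using abs_vec_index_le_vec_norm[of 0 "Binv x *\<^sub>v kvec x k"]
      vec_norm_Binv_kvec_le[OF assms, of k] carrier_matD[OF Binv(2)[OF assms]] by simp
  then have "1 / (real n * h) * \<bar>(Binv x *\<^sub>v kvec x k) $ 0\<bar>
      \<le> 1 / (real n * h) * (sqrt (exp 1) * Kmax / lam0)"
    by (rule mult_left_mono) (use h_pos in simp)
  then show ?thesis using h_pos by (simp add: Wnk_eq[OF assms] abs_mult)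
qed

lemma card_window_le: "real (card (window x)) \<le> 2 * (real n * h) + 1"
proof -
  have "window x = {l \<in> {1..n}. x - h \<le> xpt n l \<and> xpt n l \<le> (x - h) + 2 * h}"
    by (auto simp: window_def)
  then show ?thesis
    using card_design_points_interval[OF n_pos, of "2 * h" "x - h"] h_pos by (simp add: mult_ac)
qed

lemma card_window_union_le:
  "real (card (window a \<union> window b)) \<le> real n * (2 * h + \<bar>a - b\<bar>) + 1"
proof -
  have "card (window a \<union> window b)
      \<le> card {l \<in> {1..n}. min a b - h \<le> xpt n l \<and> xpt n l \<le> (min a b - h) + (2 * h + \<bar>a - b\<bar>)}"
    by (intro card_mono) (auto simp: window_def)
  then show ?thesis
    using card_design_points_interval[OF n_pos, of "2 * h + \<bar>a - b\<bar>" "min a b - h"] h_pos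
    by linarith
qed

lemma lam0_le_4Kmax: "lam0 \<le> 4 * Kmax"
proof -
  \<comment> \<open>The Rayleigh bound at the first unit vector gives \<open>lam0 \<le> B\<^sub>0\<^sub>0\<close>,
    an average of kernel values.\<close>
  define e where "e = Uvec \<beta> 0"
  have e: "e \<in> carrier_vec D" by (simp add: e_def carrier_vecI)
  have "lam0 = lam0 * (e \<bullet> e)"
    using e by (simp add: e_def scalar_prod_Uvec_zero)
  also have "\<dots> \<le> e \<bullet> (B 0 *\<^sub>v e)"
    using eigenvalues_ge[of 0]
    by (intro scalar_prod_mult_mat_vec_ge_eigenvalue_bound[OF carrier_Bmat transpose_Bmat _ e]) simp
  also have "\<dots> = (B 0 *\<^sub>v e) $ 0"
    using carrier_Bmat[of 0] by (simp add: e_def scalar_prod_Uvec_zero carrier_vecI)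
  also have "\<dots> = e \<bullet> row (B 0) 0"
  proof -
    have "row (B 0) 0 \<in> carrier_vec D"
      using carrier_matD[OF carrier_Bmat] by (simp add: carrier_vecI)
    then show ?thesis using carrier_Bmat[of 0] by (simp add: comm_scalar_prod[OF _ e])
  qed
  also have "\<dots> = B 0 $$ (0, 0)"
    using carrier_Bmat[of 0] by (simp add: e_def scalar_prod_Uvec_zero carrier_vecI)
  also have "\<dots> = 1 / (real n * h) * (\<Sum>l = 1..n. K (xpt n l / h))"
    by (simp add: index_Bmat)
  also have "\<dots> \<le> 1 / (real n * h) * (real (card ({1..n} \<inter> window 0)) * Kmax)"
    using h_pos K_le not_in_window[THEN one_less_abs_div_h, of _ 0]
    by (intro mult_left_mono sum_le_card_support_mult) (auto simp: K_vanishes)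
  also have "\<dots> \<le> 1 / (real n * h) * ((2 * (real n * h) + 1) * Kmax)"
    unfolding Int_window using card_window_le[of 0] Kmax_nonneg h_pos
    by (intro mult_left_mono mult_right_mono) simp_all
  also have "\<dots> = (2 + 1 / (real n * h)) * Kmax"
    using h_pos n_pos by (simp add: field_simps)
  also have "\<dots> \<le> 4 * Kmax"
    using inverse_nh_le_2 Kmax_nonneg by (intro mult_right_mono) simp_all
  finally show ?thesis .
qed

lemma sum_Wnk_sq_le:
  assumes "x \<in> {0..1}"
  shows "(\<Sum>k = 1..n. (Wnk K \<beta> n h k x)\<^sup>2)
    \<le> (2 * (real n * h) + 1) * (1 / (real n * h) * (sqrt (exp 1) * Kmax / lam0))\<^sup>2"
proof -
  have "(\<Sum>k = 1..n. (Wnk K \<beta> n h k x)\<^sup>2)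
      \<le> real (card ({1..n} \<inter> window x)) * (1 / (real n * h) * (sqrt (exp 1) * Kmax / lam0))\<^sup>2"
  proof (rule sum_le_card_support_mult)
    fix k
    show "(Wnk K \<beta> n h k x)\<^sup>2 \<le> (1 / (real n * h) * (sqrt (exp 1) * Kmax / lam0))\<^sup>2"
      using abs_Wnk_le[OF assms, of k] by (metis abs_ge_zero power2_abs power_mono)
  qed (auto simp: Wnk_eq_0 not_in_window)
  also have "\<dots> \<le> (2 * (real n * h) + 1) * (1 / (real n * h) * (sqrt (exp 1) * Kmax / lam0))\<^sup>2"
    unfolding Int_window using card_window_le[of x] by (intro mult_right_mono) simp_all
  finally show ?thesis .
qed

lemma abs_Bmat_diff_le:
  assumes "i < D" "j < D"
  shows "\<bar>(B b - B a) $$ (i, j)\<bar>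
    \<le> 1 / (real n * h) * (real (card (window a \<union> window b)) * ((2 * Kmax + LK) * (\<bar>a - b\<bar> / h)))"
proof -
  define m where "m x l = ((xpt n l - x) / h) ^ i / fact i * (((xpt n l - x) / h) ^ j / fact j)
                            * K ((xpt n l - x) / h)" for x l
  have "(B b - B a) $$ (i, j) = B b $$ (i, j) - B a $$ (i, j)"
    using assms carrier_matD[OF carrier_Bmat] by simp
  also have "\<dots> = 1 / (real n * h) * (\<Sum>l = 1..n. m b l - m a l)"
    using assms by (simp add: index_Bmat m_def sum_subtractf right_diff_distrib)
  finally have "\<bar>(B b - B a) $$ (i, j)\<bar> = 1 / (real n * h) * \<bar>\<Sum>l = 1..n. m b l - m a l\<bar>"
    using h_pos n_pos by (simp add: abs_mult)
  also have "\<dots> \<le> 1 / (real n * h) * (\<Sum>l = 1..n. \<bar>m b l - m a l\<bar>)"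
    using h_pos n_pos by (intro mult_left_mono sum_abs) simp
  also have "\<dots> \<le> 1 / (real n * h) * (real (card ({1..n} \<inter> (window a \<union> window b)))
                                       * ((2 * Kmax + LK) * (\<bar>a - b\<bar> / h)))"
  proof (intro mult_left_mono sum_le_card_support_mult)
    fix l
    have "\<bar>(xpt n l - b) / h - (xpt n l - a) / h\<bar> = \<bar>a - b\<bar> / h"
      using h_pos by (simp add: diff_divide_distrib[symmetric] abs_divide)
    then show "\<bar>m b l - m a l\<bar> \<le> (2 * Kmax + LK) * (\<bar>a - b\<bar> / h)"
      unfolding m_def by (metis abs_moment_diff_le)
  next
    fix l assume "l \<in> {1..n}" "l \<notin> window a \<union> window b"
    then have "h < \<bar>xpt n l - a\<bar>" "h < \<bar>xpt n l - b\<bar>" using not_in_window by auto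
    then have "1 < \<bar>(xpt n l - a) / h\<bar>" "1 < \<bar>(xpt n l - b) / h\<bar>"
      using one_less_abs_div_h by blast+
    then show "\<bar>m b l - m a l\<bar> = 0" by (simp add: m_def K_vanishes)
  qed (use h_pos n_pos in simp_all)
  also have "{1..n} \<inter> (window a \<union> window b) = window a \<union> window b"
    using Int_window by blast
  finally show ?thesis .
qed

lemma vec_norm_kvec_diff_le: "vec_norm (kvec a k - kvec b k) \<le> L1const LK Kmax * (\<bar>a - b\<bar> / h)"
proof -
  have "(xpt n k - a) / h - (xpt n k - b) / h = (b - a) / h"
    by (simp add: diff_divide_distrib)
  then have "\<bar>(xpt n k - a) / h - (xpt n k - b) / h\<bar> = \<bar>a - b\<bar> / h"
    using h_pos by (simp add: abs_divide abs_minus_commute)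
  then show ?thesis
    using vec_norm_kernel_Uvec_diff_le[of "(xpt n k - a) / h" \<beta> "(xpt n k - b) / h"]
    unfolding L1const_def by (simp only:)
qed

lemma Wnk_diff_eq:
  assumes ab: "a \<in> {0..1}" "b \<in> {0..1}"
  shows "Wnk K \<beta> n h k a - Wnk K \<beta> n h k b = 1 / (real n * h) *
    (Binv a *\<^sub>v ((kvec a k - kvec b k) + (B b - B a) *\<^sub>v (Binv b *\<^sub>v kvec b k))) $ 0"
proof -
  have "Binv a *\<^sub>v kvec a k - Binv b *\<^sub>v kvec b k
      = Binv a *\<^sub>v ((kvec a k - kvec b k) + (B b - B a) *\<^sub>v (Binv b *\<^sub>v kvec b k))"
    by (rule inverse_mult_vec_diff[OF Binv(2)[OF ab(1)] Binv(2)[OF ab(2)] carrier_Bmat carrier_Bmat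
          kvec_carrier kvec_carrier Binv(4)[OF ab(1)] Binv(3)[OF ab(2)]])
  moreover have "(Binv a *\<^sub>v kvec a k - Binv b *\<^sub>v kvec b k) $ 0
      = (Binv a *\<^sub>v kvec a k) $ 0 - (Binv b *\<^sub>v kvec b k) $ 0"
    using carrier_matD(1)[OF Binv(2)[OF ab(2)]] by (intro index_minus_vec(1)) simp
  ultimately show ?thesis
    unfolding Wnk_eq[OF ab(1)] Wnk_eq[OF ab(2)] by (simp add: right_diff_distrib)
qed

lemma abs_Wnk_diff_le:
  assumes ab: "a \<in> {0..1}" "b \<in> {0..1}"
    and entries: "\<And>i j. i < D \<Longrightarrow> j < D \<Longrightarrow> \<bar>(B b - B a) $$ (i, j)\<bar> \<le> E"
  shows "\<bar>Wnk K \<beta> n h k a - Wnk K \<beta> n h k b\<bar>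
    \<le> 1 / (real n * h) * ((L1const LK Kmax * (\<bar>a - b\<bar> / h)
                           + real D * E * (sqrt (exp 1) * Kmax / lam0)) / lam0)"
proof -
  define w where "w = Binv b *\<^sub>v kvec b k"
  define V where "V = (kvec a k - kvec b k) + (B b - B a) *\<^sub>v w"
  have w: "w \<in> carrier_vec D" using Binv(2)[OF ab(2)] kvec_carrier by (simp add: w_def)
  have dB: "B b - B a \<in> carrier_mat D D" by (rule minus_carrier_mat[OF carrier_Bmat])
  have V: "V \<in> carrier_vec D" using dB w kvec_carrier by (simp add: V_def)
  have "vec_norm ((B b - B a) *\<^sub>v w) \<le> real D * E * (sqrt (exp 1) * Kmax / lam0)"
  proof -
    have "0 \<le> E" using entries[of 0 0] by simp
    then have "real D * E * vec_norm w \<le> real D * E * (sqrt (exp 1) * Kmax / lam0)"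
      using vec_norm_Binv_kvec_le[OF ab(2)] by (intro mult_left_mono) (simp_all add: w_def)
    with vec_norm_mult_mat_vec_le[OF dB w entries] show ?thesis by linarith
  qed
  then have "vec_norm V
      \<le> L1const LK Kmax * (\<bar>a - b\<bar> / h) + real D * E * (sqrt (exp 1) * Kmax / lam0)"
    using vec_norm_add_le[of "(B b - B a) *\<^sub>v w" "kvec a k - kvec b k"]
      vec_norm_kvec_diff_le[where a=a and b=b and k=k] carrier_matD[OF carrier_Bmat[of a]]
    unfolding V_def by simp
  moreover have "\<bar>(Binv a *\<^sub>v V) $ 0\<bar> \<le> vec_norm V / lam0"
    using abs_vec_index_le_vec_norm[of 0 "Binv a *\<^sub>v V"] vec_norm_Binv_mult_le[OF ab(1) V]
      carrier_matD[OF Binv(2)[OF ab(1)]] by simp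
  ultimately have "\<bar>(Binv a *\<^sub>v V) $ 0\<bar>
      \<le> (L1const LK Kmax * (\<bar>a - b\<bar> / h) + real D * E * (sqrt (exp 1) * Kmax / lam0)) / lam0"
    using lam0_pos by (meson divide_right_mono less_imp_le order_trans)
  then have "1 / (real n * h) * \<bar>(Binv a *\<^sub>v V) $ 0\<bar>
      \<le> 1 / (real n * h) * ((L1const LK Kmax * (\<bar>a - b\<bar> / h)
                             + real D * E * (sqrt (exp 1) * Kmax / lam0)) / lam0)"
    by (rule mult_left_mono) (use h_pos in simp)
  then show ?thesis
    using h_pos by (simp add: Wnk_diff_eq[OF ab] V_def w_def abs_mult)
qed

lemma Kmax_pos: "0 < Kmax"
  using lam0_le_4Kmax lam0_pos by simp

lemma L2const_eq: "L2const \<beta> LK Kmax = real D * (2 * Kmax + LK)"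
  unfolding L2const_def D_eq_ceiling by (simp add: algebra_simps)

lemma L2const_ge: "2 * Kmax + LK \<le> L2const \<beta> LK Kmax"
proof -
  have "1 * (2 * Kmax + LK) \<le> real D * (2 * Kmax + LK)"
    using Kmax_nonneg LK_nonneg by (intro mult_right_mono) simp_all
  then show ?thesis by (simp add: L2const_eq)
qed

lemma sum_Wnk_diff_sq_le_crude:
  assumes ab: "a \<in> {0..1}" "b \<in> {0..1}"
  shows "(\<Sum>k = 1..n. (Wnk K \<beta> n h k a - Wnk K \<beta> n h k b)\<^sup>2)
    \<le> 1 / (real n * h) * Wconst \<beta> LK Kmax lam0"
proof -
  define c where "c = 1 / (real n * h)"
  have c: "0 < c" "c * (real n * h) = 1" using h_pos n_pos by (simp_all add: c_def)
  have "(\<Sum>k = 1..n. (Wnk K \<beta> n h k a - Wnk K \<beta> n h k b)\<^sup>2)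
      \<le> (\<Sum>k = 1..n. 2 * (Wnk K \<beta> n h k a)\<^sup>2 + 2 * (Wnk K \<beta> n h k b)\<^sup>2)"
  proof (intro sum_mono)
    fix k
    have "0 \<le> (Wnk K \<beta> n h k a + Wnk K \<beta> n h k b)\<^sup>2" by simp
    then show "(Wnk K \<beta> n h k a - Wnk K \<beta> n h k b)\<^sup>2
        \<le> 2 * (Wnk K \<beta> n h k a)\<^sup>2 + 2 * (Wnk K \<beta> n h k b)\<^sup>2"
      by (simp add: power2_eq_square algebra_simps)
  qed
  also have "\<dots> = 2 * (\<Sum>k = 1..n. (Wnk K \<beta> n h k a)\<^sup>2) + 2 * (\<Sum>k = 1..n. (Wnk K \<beta> n h k b)\<^sup>2)"
    by (simp add: sum.distrib sum_distrib_left)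
  also have "\<dots> \<le> 4 * ((2 * (real n * h) + 1) * (c * (sqrt (exp 1) * Kmax / lam0))\<^sup>2)"
    using sum_Wnk_sq_le[OF ab(1)] sum_Wnk_sq_le[OF ab(2)] by (simp add: c_def)
  also have "\<dots> \<le> 4 * ((4 * (real n * h)) * (c * (sqrt (exp 1) * Kmax / lam0))\<^sup>2)"
    using nh_ge by (intro mult_left_mono mult_right_mono) (simp_all add: ac_simps)
  also have "\<dots> = 16 * (c * (real n * h)) * c * exp 1 * (Kmax / lam0)\<^sup>2"
    by (simp add: power2_eq_square)
  also have "\<dots> \<le> 16 * c * 3 * (Kmax / lam0)\<^sup>2"
    using c exp_le by (simp add: mult_right_mono)
  also have "\<dots> \<le> c * (4 * (Cstar Kmax lam0)\<^sup>2)"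
  proof -
    have "(Cstar Kmax lam0)\<^sup>2 = 64 * (Kmax / lam0)\<^sup>2" by (simp add: Cstar_def power2_eq_square)
    moreover have "0 \<le> c * (Kmax / lam0)\<^sup>2" using c by simp
    ultimately show ?thesis by simp
  qed
  also have "\<dots> \<le> c * Wconst \<beta> LK Kmax lam0"
    using c by (intro mult_left_mono) (simp_all add: Wconst_def)
  finally show ?thesis by (simp add: c_def)
qed

lemma abs_Wnk_diff_le_window:
  assumes ab: "a \<in> {0..1}" "b \<in> {0..1}"
  shows "\<bar>Wnk K \<beta> n h k a - Wnk K \<beta> n h k b\<bar>
    \<le> 1 / (real n * h) * (\<bar>a - b\<bar> / h) * (L1const LK Kmax / lam0
         + 1 / (real n * h) * real (card (window a \<union> window b))
           * (L2const \<beta> LK Kmax * sqrt (exp 1) * Kmax / lam0\<^sup>2))"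
proof -
  define c where "c = 1 / (real n * h)"
  define q where "q = \<bar>a - b\<bar> / h"
  define N where "N = real (card (window a \<union> window b))"
  define s where "s = sqrt (exp 1) * Kmax"
  have "\<bar>Wnk K \<beta> n h k a - Wnk K \<beta> n h k b\<bar>
      \<le> c * ((L1const LK Kmax * q
                + real D * (c * (N * ((2 * Kmax + LK) * q))) * (s / lam0)) / lam0)"
    unfolding c_def q_def N_def s_def by (rule abs_Wnk_diff_le[OF ab abs_Bmat_diff_le])
  also have "\<dots> = c * q * (L1const LK Kmax / lam0 + c * N * (real D * (2 * Kmax + LK) * s / lam0\<^sup>2))"
    using lam0_pos by (simp add: field_simps power2_eq_square)
  finally show ?thesis by (simp add: c_def q_def N_def s_def L2const_eq mult.assoc)
qed

lemma card_window_union_le_close: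
  assumes close: "8 * L2const \<beta> LK Kmax / lam0 * \<bar>a - b\<bar> < h"
  shows "real (card (window a \<union> window b)) \<le> 17 / 4 * (real n * h)"
proof -
  have "8 * L2const \<beta> LK Kmax * \<bar>a - b\<bar> < h * lam0"
    using close lam0_pos by (simp add: field_simps)
  also have "\<dots> \<le> h * (2 * L2const \<beta> LK Kmax)"
    using lam0_le_4Kmax L2const_ge h_pos LK_nonneg by simp
  finally have "\<bar>a - b\<bar> \<le> h / 4" using L2const_ge Kmax_pos LK_nonneg by simp
  then have "real n * \<bar>a - b\<bar> \<le> real n * (h / 4)" by (intro mult_left_mono) simp_all
  moreover have "real n * (2 * h + \<bar>a - b\<bar>) = 2 * (real n * h) + real n * \<bar>a - b\<bar>"
    by (simp add: algebra_simps)
  ultimately show ?thesis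
    using card_window_union_le[of a b] nh_ge by (simp add: field_simps)
qed

lemma L1const_mult_lam0_le: "L1const LK Kmax * lam0 \<le> 4 * (L2const \<beta> LK Kmax * sqrt (exp 1) * Kmax)"
proof -
  have "L1const LK Kmax * lam0 \<le> sqrt (exp 1) * (LK + Kmax) * (4 * Kmax)"
    using lam0_le_4Kmax Kmax_nonneg LK_nonneg by (simp add: L1const_def mult_left_mono)
  also have "\<dots> \<le> sqrt (exp 1) * L2const \<beta> LK Kmax * (4 * Kmax)"
    using L2const_ge Kmax_nonneg by (intro mult_right_mono mult_left_mono) simp_all
  finally show ?thesis by (simp add: mult_ac)
qed

lemma sum_Wnk_diff_sq_le_close:
  assumes ab: "a \<in> {0..1}" "b \<in> {0..1}"
    and close: "8 * L2const \<beta> LK Kmax / lam0 * \<bar>a - b\<bar> < h"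
  shows "(\<Sum>k = 1..n. (Wnk K \<beta> n h k a - Wnk K \<beta> n h k b)\<^sup>2)
    \<le> 1 / (real n * h) * Wconst \<beta> LK Kmax lam0 * (8 * L2const \<beta> LK Kmax / lam0 * \<bar>a - b\<bar> / h)\<^sup>2"
proof -
  define c where "c = 1 / (real n * h)"
  define q where "q = \<bar>a - b\<bar> / h"
  define N where "N = real (card (window a \<union> window b))"
  define L2 where "L2 = L2const \<beta> LK Kmax"
  define A where "A = L1const LK Kmax / lam0"
  define X where "X = L2 * sqrt (exp 1) * Kmax / lam0\<^sup>2"
  have c: "0 < c" "c * (real n * h) = 1" using h_pos n_pos by (simp_all add: c_def)
  have "c * N \<le> c * (17 / 4 * (real n * h))"
    using card_window_union_le_close[OF close] c by (intro mult_left_mono) (simp_all add: N_def)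
  also have "\<dots> = 17 / 4" by (metis c(2) mult.left_commute mult_1_right)
  finally have \<rho>: "0 \<le> c * N" "c * N \<le> 17 / 4" using c by (simp_all add: N_def)
  have "A = L1const LK Kmax * lam0 / lam0\<^sup>2" "4 * X = 4 * (L2 * sqrt (exp 1) * Kmax) / lam0\<^sup>2"
    using lam0_pos by (simp_all add: A_def X_def power2_eq_square)
  then have AX: "0 \<le> A" "A \<le> 4 * X"
    using Kmax_nonneg LK_nonneg lam0_pos divide_right_mono[OF L1const_mult_lam0_le, of "lam0\<^sup>2"]
    by (simp_all add: A_def L1const_def L2_def)
  have "(\<Sum>k = 1..n. (Wnk K \<beta> n h k a - Wnk K \<beta> n h k b)\<^sup>2)
      \<le> real (card ({1..n} \<inter> (window a \<union> window b))) * (c * q * (A + c * N * X))\<^sup>2"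
  proof (rule sum_le_card_support_mult)
    fix k
    have "\<bar>Wnk K \<beta> n h k a - Wnk K \<beta> n h k b\<bar> \<le> c * q * (A + c * N * X)"
      using abs_Wnk_diff_le_window[OF ab, of k]
      by (simp add: c_def q_def N_def A_def X_def L2_def mult_ac)
    then show "(Wnk K \<beta> n h k a - Wnk K \<beta> n h k b)\<^sup>2 \<le> (c * q * (A + c * N * X))\<^sup>2"
      by (metis abs_ge_zero power2_abs power_mono)
  qed (auto simp: Wnk_eq_0 not_in_window)
  also have "\<dots> = c * q\<^sup>2 * (c * N * (A + c * N * X)\<^sup>2)"
    using Int_window by (simp add: N_def Int_Un_distrib power2_eq_square)
  also have "\<dots> \<le> c * q\<^sup>2 * (4 * (A + 8 * X)\<^sup>2)"
    using weighted_square_le_four_square[OF \<rho> AX] c by (intro mult_left_mono) simp_all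
  also have "4 * (A + 8 * X)\<^sup>2 = 4 * (Ctilde \<beta> LK Kmax lam0)\<^sup>2 * (8 * L2 / lam0)\<^sup>2"
    using L2const_ge Kmax_pos LK_nonneg lam0_pos
    by (simp add: Ctilde_def A_def X_def L2_def power2_eq_square field_simps)
  also have "c * q\<^sup>2 * (4 * (Ctilde \<beta> LK Kmax lam0)\<^sup>2 * (8 * L2 / lam0)\<^sup>2)
      \<le> c * q\<^sup>2 * (Wconst \<beta> LK Kmax lam0 * (8 * L2 / lam0)\<^sup>2)"
    using c by (intro mult_left_mono mult_right_mono) (simp_all add: Wconst_def)
  also have "\<dots> = c * Wconst \<beta> LK Kmax lam0 * ((8 * L2 / lam0) * q)\<^sup>2"
    by (simp only: power_mult_distrib mult_ac)
  finally show ?thesis by (simp add: c_def q_def L2_def)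
qed

lemma sum_Wnk_diff_sq_le:
  assumes ab: "a \<in> {0..1}" "b \<in> {0..1}"
  shows "(\<Sum>k = 1..n. (Wnk K \<beta> n h k a - Wnk K \<beta> n h k b)\<^sup>2)
    \<le> Wconst \<beta> LK Kmax lam0 / (real n * h ^ 3)
       * (min (8 * L2const \<beta> LK Kmax / lam0 * \<bar>a - b\<bar>) h)\<^sup>2"
proof (cases "h \<le> 8 * L2const \<beta> LK Kmax / lam0 * \<bar>a - b\<bar>")
  case True
  then show ?thesis
    using sum_Wnk_diff_sq_le_crude[OF ab] h_pos by (simp add: power2_eq_square power3_eq_cube)
next
  case False
  then show ?thesis
    using sum_Wnk_diff_sq_le_close[OF ab] h_pos
    by (simp add: power2_eq_square power3_eq_cube field_simps)
qed

end

section \<open>Variance of weighted Gaussian sums\<close>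

lemma (in prob_space) variance_sum_indep_centered:
  fixes \<epsilon> :: "'i \<Rightarrow> 'a \<Rightarrow> real"
  assumes fin: "finite I" and indep: "indep_vars (\<lambda>_. borel) \<epsilon> I"
    and int: "\<And>k. k \<in> I \<Longrightarrow> integrable M (\<epsilon> k)"
    and int_sq: "\<And>k. k \<in> I \<Longrightarrow> integrable M (\<lambda>\<omega>. (\<epsilon> k \<omega>)\<^sup>2)"
    and mean: "\<And>k. k \<in> I \<Longrightarrow> expectation (\<epsilon> k) = 0"
    and second_moment: "\<And>k. k \<in> I \<Longrightarrow> expectation (\<lambda>\<omega>. (\<epsilon> k \<omega>)\<^sup>2) = \<sigma>\<^sup>2"
  shows "variance (\<lambda>\<omega>. \<Sum>k\<in>I. c k * \<epsilon> k \<omega>) = \<sigma>\<^sup>2 * (\<Sum>k\<in>I. (c k)\<^sup>2)"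
proof -
  have product: "integrable M (\<lambda>\<omega>. \<epsilon> j \<omega> * \<epsilon> k \<omega>)
      \<and> expectation (\<lambda>\<omega>. \<epsilon> j \<omega> * \<epsilon> k \<omega>) = (if j = k then \<sigma>\<^sup>2 else 0)"
    if "j \<in> I" "k \<in> I" for j k
  proof (cases "j = k")
    case True
    then show ?thesis using int_sq second_moment that by (simp add: power2_eq_square)
  next
    case False
    have "indep_vars (\<lambda>_. borel) \<epsilon> {j, k}"
      by (rule indep_vars_subset[OF indep]) (use that in auto)
    then have "integrable M (\<lambda>\<omega>. \<Prod>i\<in>{j, k}. \<epsilon> i \<omega>)"
      and "expectation (\<lambda>\<omega>. \<Prod>i\<in>{j, k}. \<epsilon> i \<omega>) = (\<Prod>i\<in>{j, k}. expectation (\<epsilon> i))"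
      using int that by (auto intro!: indep_vars_integrable indep_vars_lebesgue_integral)
    then show ?thesis using False mean that by simp
  qed
  have "expectation (\<lambda>\<omega>. \<Sum>k\<in>I. c k * \<epsilon> k \<omega>) = 0"
    using int mean by (simp add: Bochner_Integration.integral_sum)
  then have "variance (\<lambda>\<omega>. \<Sum>k\<in>I. c k * \<epsilon> k \<omega>)
      = expectation (\<lambda>\<omega>. \<Sum>j\<in>I. \<Sum>k\<in>I. c j * c k * (\<epsilon> j \<omega> * \<epsilon> k \<omega>))"
    by (simp add: power2_eq_square sum_product mult_ac)
  also have "\<dots> = (\<Sum>j\<in>I. \<Sum>k\<in>I. c j * c k * (if j = k then \<sigma>\<^sup>2 else 0))"
    using product by (simp add: Bochner_Integration.integral_sum)
  also have "\<dots> = \<sigma>\<^sup>2 * (\<Sum>k\<in>I. (c k)\<^sup>2)"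
    using fin
    by (simp add: sum_distrib_left power2_eq_square mult_ac if_distrib sum.delta cong: if_cong)
  finally show ?thesis .
qed

lemma (in prob_space) variance_sum_indep_normal:
  fixes \<epsilon> :: "'i \<Rightarrow> 'a \<Rightarrow> real"
  assumes "finite I" "0 < \<sigma>" "indep_vars (\<lambda>_. borel) \<epsilon> I"
    and normal: "\<And>k. k \<in> I \<Longrightarrow> distributed M lborel (\<epsilon> k) (normal_density 0 \<sigma>)"
  shows "variance (\<lambda>\<omega>. \<Sum>k\<in>I. c k * \<epsilon> k \<omega>) = \<sigma>\<^sup>2 * (\<Sum>k\<in>I. (c k)\<^sup>2)"
proof (rule variance_sum_indep_centered[OF assms(1,3)])
  fix k assume k: "k \<in> I"
  have "integrable lborel (\<lambda>x. normal_density 0 \<sigma> x * x)"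
    using \<open>0 < \<sigma>\<close> by (rule integrable_normal_moment_nz_1)
  then show "integrable M (\<epsilon> k)"
    using distributed_integrable[OF normal[OF k], of "\<lambda>x. x"] by simp
  have "integrable lborel (\<lambda>x. normal_density 0 \<sigma> x * (x - 0) ^ 2)"
    using \<open>0 < \<sigma>\<close> by (rule integrable_normal_moment)
  then show "integrable M (\<lambda>\<omega>. (\<epsilon> k \<omega>)\<^sup>2)"
    using distributed_integrable[OF normal[OF k], of "\<lambda>x. x\<^sup>2"] by simp
  show "expectation (\<epsilon> k) = 0"
    using normal_distributed_expectation[OF \<open>0 < \<sigma>\<close> normal[OF k]] by simp
  then show "expectation (\<lambda>\<omega>. (\<epsilon> k \<omega>)\<^sup>2) = \<sigma>\<^sup>2"
    using normal_distributed_variance[OF \<open>0 < \<sigma>\<close> normal[OF k]] by simp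
qed

theorem mainTheorem16:
  fixes K :: "real \<Rightarrow> real" and \<beta> h lam0 Kmin Kmax \<Delta> LK a b :: real and n :: nat
  assumes beta_pos: "\<beta> > 0"
    and K_nonneg: "\<forall>u. K u \<ge> 0"
    and K_int: "(K has_integral 1) UNIV"
    and K_supp: "\<forall>u. \<bar>u\<bar> > 1 \<longrightarrow> K u = 0"
    and K_consts: "Kmin > 0" "Kmax > 0" "\<Delta> > 0"
    and K_lower: "\<forall>u. \<bar>u\<bar> \<le> \<Delta> \<longrightarrow> Kmin \<le> K u"
    and K_upper: "\<forall>u. K u \<le> Kmax"
    and K_lip: "lipschitz_on LK UNIV K"
    and n_pos: "n \<ge> 1"
    and h_ge: "h \<ge> 1 / (2 * real n)"
    and lam_pos: "lam0 > 0"
    and eig: "\<forall>x \<in> {0..1}. \<forall>\<mu>. eigenvalue (Bmat K \<beta> n h x) \<mu> \<longrightarrow> \<mu> \<ge> lam0"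
    and ab: "a \<in> {0..1}" "b \<in> {0..1}"
  shows "(\<Sum>k = 1..n. (Wnk K \<beta> n h k a - Wnk K \<beta> n h k b)\<^sup>2)
           \<le> Wconst \<beta> LK Kmax lam0 / (real n * h ^ 3)
              * (min (8 * L2const \<beta> LK Kmax / lam0 * \<bar>a - b\<bar>) h)\<^sup>2
       \<and> (\<forall>(M :: 'w measure) (\<epsilon> :: nat \<Rightarrow> 'w \<Rightarrow> real) \<sigma>.
            prob_space M \<and> \<sigma> > 0
            \<and> prob_space.indep_vars M (\<lambda>_. borel) \<epsilon> {1..n}
            \<and> (\<forall>k \<in> {1..n}. distributed M lborel (\<epsilon> k) (normal_density 0 \<sigma>))
            \<longrightarrow> prob_space.variance M
                  (\<lambda>\<omega>. (\<Sum>k = 1..n. Wnk K \<beta> n h k a * \<epsilon> k \<omega>) - (\<Sum>k = 1..n. Wnk K \<beta> n h k b * \<epsilon> k \<omega>))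
                \<le> \<sigma>\<^sup>2 * Wconst \<beta> LK Kmax lam0 / (real n * h ^ 3)
                   * (min (8 * L2const \<beta> LK Kmax / lam0 * \<bar>a - b\<bar>) h)\<^sup>2)"
proof -
  interpret local_poly_design K Kmax LK \<beta> h lam0 n
    using assms by unfold_locales auto
  let ?S = "\<Sum>k = 1..n. (Wnk K \<beta> n h k a - Wnk K \<beta> n h k b)\<^sup>2"
  let ?R = "Wconst \<beta> LK Kmax lam0 / (real n * h ^ 3)
             * (min (8 * L2const \<beta> LK Kmax / lam0 * \<bar>a - b\<bar>) h)\<^sup>2"
  have bound: "?S \<le> ?R" by (rule sum_Wnk_diff_sq_le[OF ab])
  have "prob_space.variance M
      (\<lambda>\<omega>. (\<Sum>k = 1..n. Wnk K \<beta> n h k a * \<epsilon> k \<omega>) - (\<Sum>k = 1..n. Wnk K \<beta> n h k b * \<epsilon> k \<omega>))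
      \<le> \<sigma>\<^sup>2 * ?R"
    if "prob_space M" "0 < \<sigma>" "prob_space.indep_vars M (\<lambda>_. borel) \<epsilon> {1..n}"
      "\<forall>k \<in> {1..n}. distributed M lborel (\<epsilon> k) (normal_density 0 \<sigma>)"
    for M :: "'w measure" and \<epsilon> \<sigma>
  proof -
    interpret prob_space M by (rule that(1))
    have "variance (\<lambda>\<omega>. (\<Sum>k = 1..n. Wnk K \<beta> n h k a * \<epsilon> k \<omega>) - (\<Sum>k = 1..n. Wnk K \<beta> n h k b * \<epsilon> k \<omega>))
        = \<sigma>\<^sup>2 * ?S"
      using variance_sum_indep_normal[of "{1..n}" \<sigma> \<epsilon> "\<lambda>k. Wnk K \<beta> n h k a - Wnk K \<beta> n h k b"] that
      by (simp add: sum_subtractf left_diff_distrib)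
    then show ?thesis using mult_left_mono[OF bound, of "\<sigma>\<^sup>2"] by simp
  qed
  with bound show ?thesis by (simp add: mult.assoc)
qed

end
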